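(* Let $k\ge1$ and $A\in\mathbb{C}^{k\times k}$ with $\|A-\mathbbm{1}_k\|<1/k$, let $\mathbf{w}=(w_1,\ldots,w_k)^T=A\mathbf{z}$ for $\mathbf{z}=(z_1,\ldots,z_k)^T\in\mathbb{C}^k$, and let $f:\mathbb{C}^k\to\mathbb{C}$ be holomorphic. Then \[ \frac{f(0)}{\det(A)}=\frac{1}{(2\pi i)^k}\oint_{\partial D}\cdots\oint_{\partial D}\frac{f(\mathbf{z})}{w_1\cdots w_k}\,dz_1\cdots dz_k . \]
   Context: $\|\cdot\|$ is the Frobenius norm, $\mathbbm{1}_k$ the identity, $\partial D=\{|z|=1\}$ the counterclockwise unit circle, and the integral is the iterated contour integral over the torus $(\partial D)^k$ in the variables $z_1,\ldots,z_k$. *)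

theory Defs
  imports "HOL-Complex_Analysis.Complex_Analysis"
begin

definition holomorphic_cn :: "(complex^'n \<Rightarrow> complex) \<Rightarrow> bool" where
  "holomorphic_cn f \<longleftrightarrow>
     (\<forall>z. \<exists>L. (f has_derivative L) (at z) \<and> (\<forall>(c::complex) v. L (c *s v) = c * L v))"

definition vec_upd :: "complex^'n \<Rightarrow> 'n \<Rightarrow> complex \<Rightarrow> complex^'n" where
  "vec_upd z i \<zeta> = (\<chi> j. if j = i then \<zeta> else z $ j)"

fun torus_iter :: "'n list \<Rightarrow> (complex^'n \<Rightarrow> complex) \<Rightarrow> complex^'n \<Rightarrow> complex" where
  "torus_iter [] F z = F z"
| "torus_iter (i # is) F z =
     contour_integral (circlepath 0 1) (\<lambda>\<zeta>. torus_iter is F (vec_upd z i \<zeta>))"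

text \<open>Iterated integral dz_1 ... dz_k for an enumeration ord = [1,...,k] of
  the coordinates: z_1 innermost, z_k outermost.\<close>
definition torus_integral :: "'n list \<Rightarrow> (complex^'n \<Rightarrow> complex) \<Rightarrow> complex" where
  "torus_integral ord F = torus_iter (rev ord) F 0"

end

theory Submission
  imports Defs
begin

text \<open>Integrate out one variable at a time. Strict diagonal dominance of the rows (which
  follows from \<open>\<parallel>A - 1\<parallel> < 1/k\<close>) shows that on the polydisc only the factor \<open>w\<^sub>i\<close> of the
  integrand can vanish, at a point inside the unit disc of the variable \<open>z\<^sub>i\<close>; Cauchy's
  formula in \<open>z\<^sub>i\<close> evaluates the rest there and contributes \<open>2\<pi>i / a\<^sub>i\<^sub>i\<close>. Substituting that
  root turns the remaining linear forms into those of the Schur complement of \<open>a\<^sub>i\<^sub>i\<close>,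
  which is again strictly diagonally dominant, and \<open>det A = a\<^sub>i\<^sub>i \<cdot> det\<close> (Schur complement).\<close>

definition schur_complement :: "'a::field^'n^'n \<Rightarrow> 'n \<Rightarrow> 'a^'n^'n" where
  "schur_complement A i = (\<chi> j l.
     if j = i then of_bool (l = i) else if l = i then 0 else A$j$l - A$j$i * A$i$l / A$i$i)"

lemma det_replace_column_of_identity:
  fixes x :: "'n::finite \<Rightarrow> 'a::field"
  shows "det (\<chi> r s. if s = k then x r else of_bool (r = s)) = x k"
proof -
  have "(\<chi> r s. if s = k then x r else of_bool (r = s)) =
      (\<chi> r s. if s = k then (mat 1 *v vec_lambda x)$r else (mat 1 :: 'a^'n^'n)$r$s)"
    by (simp add: vec_eq_iff matrix_vector_mul_lid) (simp add: mat_def)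
  then show ?thesis
    using cramer_lemma[where A = "mat 1", of k "vec_lambda x"] by simp
qed

lemma det_schur_complement:
  fixes A :: "'a::field^'n^'n"
  assumes a: "A$i$i \<noteq> 0"
  shows "det A = A$i$i * det (schur_complement A i)"
proof -
  define L :: "'a^'n^'n" where
    "L = (\<chi> r s. if s = i then (if r = i then 1 else A$r$i / A$i$i) else of_bool (r = s))"
  define U :: "'a^'n^'n" where "U = (\<chi> r s. if r = i then A$i$s else of_bool (r = s))"
  define C :: "'a^'n^'n" where
    "C = (\<chi> j l. if j = i then A$i$l else if l = i then 0 else A$j$l - A$j$i * A$i$l / A$i$i)"
  have "schur_complement A i ** U = C"
    unfolding vec_eq_iff
  proof (intro allI)
    fix j l
    have "(schur_complement A i ** U)$j$l = (\<Sum>m\<in>UNIV. if m = (if j = i then i else l) then C$j$l else 0)"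
      unfolding matrix_matrix_mult_def vec_lambda_beta
      by (intro sum.cong refl) (auto simp: schur_complement_def U_def C_def)
    then show "(schur_complement A i ** U)$j$l = C$j$l" by simp
  qed
  moreover have "L ** C = A"
    unfolding vec_eq_iff
  proof (intro allI)
    fix j l
    have "(L ** C)$j$l = (\<Sum>m\<in>UNIV. (if m = j then C$j$l else 0) + (if m = i \<and> j \<noteq> i then A$j$i / A$i$i * C$i$l else 0))"
      unfolding matrix_matrix_mult_def vec_lambda_beta
      by (intro sum.cong refl) (auto simp: L_def)
    then show "(L ** C)$j$l = A$j$l"
      using a by (simp add: sum.distrib C_def)
  qed
  ultimately have "A = L ** (schur_complement A i ** U)"
    by simp
  moreover have "det L = 1"
    using det_replace_column_of_identity[of i "\<lambda>r. if r = i then 1 else A$r$i / A$i$i"]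
    by (simp add: L_def)
  moreover have "det U = A$i$i"
  proof -
    have "U = transpose (\<chi> r s. if s = i then A$i$r else of_bool (r = s))"
      by (auto simp: U_def transpose_def vec_eq_iff)
    then show ?thesis
      using det_replace_column_of_identity[of i "\<lambda>r. A$i$r"] by simp
  qed
  ultimately show ?thesis
    by (metis det_mul mult.commute mult_1_left)
qed

lemma sum_remove_two:
  fixes f :: "'n::finite \<Rightarrow> 'b::comm_monoid_add"
  assumes "i \<noteq> j"
  shows "(\<Sum>l\<in>UNIV-{j}. f l) = f i + (\<Sum>l\<in>UNIV-{i,j}. f l)"
proof -
  have "UNIV - {j} - {i} = UNIV - {i, j}"
    by auto
  then show ?thesis
    using assms by (subst sum.remove[of _ i]) auto
qed

lemma schur_complement_row_dominant:
  fixes A :: "'a::real_normed_field^'n^'n"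
  assumes dom_i: "(\<Sum>l\<in>UNIV-{i}. norm (A$i$l)) < norm (A$i$i)"
    and dom_j: "(\<Sum>l\<in>UNIV-{j}. norm (A$j$l)) < norm (A$j$j)"
    and "j \<noteq> i"
  shows "(\<Sum>l\<in>UNIV-{j}. norm (schur_complement A i$j$l)) < norm (schur_complement A i$j$j)"
proof -
  let ?a = "norm (A$i$i)"
  define S where "S = (\<Sum>l\<in>UNIV-{i,j}. norm (A$j$l))"
  define T where "T = (\<Sum>l\<in>UNIV-{i,j}. norm (A$i$l))"
  have row_i: "T + norm (A$i$j) < ?a"
    using dom_i sum_remove_two[OF \<open>j \<noteq> i\<close>, of "\<lambda>l. norm (A$i$l)"]
    by (simp add: T_def insert_commute)
  moreover have "T \<ge> 0"
    by (simp add: T_def sum_nonneg)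
  ultimately have "?a > 0"
    using norm_ge_zero[of "A$i$j"] by linarith
  have "(\<Sum>l\<in>UNIV-{j}. norm (schur_complement A i$j$l))
      = (\<Sum>l\<in>UNIV-{i,j}. norm (schur_complement A i$j$l))"
    using sum_remove_two[OF \<open>j \<noteq> i\<close>[symmetric], of "\<lambda>l. norm (schur_complement A i$j$l)"]
    by (simp add: schur_complement_def \<open>j \<noteq> i\<close>)
  also have "\<dots> = (\<Sum>l\<in>UNIV-{i,j}. norm (A$j$l - A$j$i * A$i$l / A$i$i))"
    using \<open>j \<noteq> i\<close> by (intro sum.cong) (auto simp: schur_complement_def)
  also have "\<dots> \<le> (\<Sum>l\<in>UNIV-{i,j}. norm (A$j$l) + norm (A$j$i) / ?a * norm (A$i$l))"
    by (intro sum_mono order_trans[OF norm_triangle_ineq4]) (simp add: norm_mult norm_divide)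
  also have "\<dots> = S + norm (A$j$i) / ?a * T"
    by (simp add: S_def T_def sum.distrib sum_distrib_left)
  also have "\<dots> < norm (A$j$j) - norm (A$j$i) / ?a * norm (A$i$j)"
  proof -
    have "norm (A$j$i) * (T + norm (A$i$j)) \<le> norm (A$j$i) * ?a"
      using row_i by (intro mult_left_mono) auto
    then have "norm (A$j$i) / ?a * (T + norm (A$i$j)) \<le> norm (A$j$i)"
      using \<open>?a > 0\<close> by (simp add: field_simps)
    moreover have "norm (A$j$i) + S < norm (A$j$j)"
      using dom_j sum_remove_two[OF \<open>j \<noteq> i\<close>[symmetric], of "\<lambda>l. norm (A$j$l)"]
      by (simp add: S_def insert_commute)
    ultimately show ?thesis
      by (simp add: algebra_simps add_divide_distrib)
  qed
  also have "\<dots> \<le> norm (schur_complement A i$j$j)"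
    using norm_triangle_ineq2[of "A$j$j" "A$j$i * A$i$j / A$i$i"] \<open>j \<noteq> i\<close>
    by (simp add: schur_complement_def norm_mult norm_divide)
  finally show ?thesis .
qed

text \<open>Invariant of the elimination: the rows outside \<open>I\<close> are unit rows (coordinates already
  integrated out) and the block \<open>I\<close> is strictly row diagonally dominant.\<close>

definition dominant_block :: "'n::finite set \<Rightarrow> 'a::real_normed_field^'n^'n \<Rightarrow> bool" where
  "dominant_block I A \<longleftrightarrow>
     (\<forall>j. j \<notin> I \<longrightarrow> (\<forall>l. A$j$l = of_bool (l = j))) \<and>
     (\<forall>j\<in>I. \<forall>l. l \<notin> I \<longrightarrow> A$j$l = 0) \<and>
     (\<forall>j\<in>I. (\<Sum>l\<in>UNIV-{j}. norm (A$j$l)) < norm (A$j$j))"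

lemma dominant_block_diag_nonzero:
  fixes A :: "'a::real_normed_field^'n^'n"
  assumes "dominant_block I A" "i \<in> I"
  shows "A$i$i \<noteq> 0"
  using assms sum_nonneg[of "UNIV-{i}" "\<lambda>l. norm (A$i$l)"]
  unfolding dominant_block_def by force

lemma dominant_block_mulv_nonzero:
  fixes A :: "'a::real_normed_field^'n^'n" and x :: "'a^'n"
  assumes dom: "dominant_block I A" and "j \<in> I"
    and x: "\<forall>l\<in>I. norm (x$l) \<le> norm (x$j)" "x$j \<noteq> 0"
  shows "(A *v x)$j \<noteq> 0"
proof -
  have "norm (\<Sum>l\<in>UNIV-{j}. A$j$l * x$l) \<le> (\<Sum>l\<in>UNIV-{j}. norm (A$j$l) * norm (x$j))"
  proof (rule order_trans[OF norm_sum sum_mono])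
    fix l
    show "norm (A$j$l * x$l) \<le> norm (A$j$l) * norm (x$j)"
      using dom \<open>j \<in> I\<close> x(1) by (cases "l \<in> I") (auto simp: norm_mult dominant_block_def intro: mult_left_mono)
  qed
  also have "\<dots> < norm (A$j$j * x$j)"
    using dom \<open>j \<in> I\<close> x(2) by (simp add: dominant_block_def norm_mult flip: sum_distrib_right)
  finally have "(\<Sum>l\<in>UNIV-{j}. A$j$l * x$l) \<noteq> - (A$j$j * x$j)"
    by auto
  moreover have "(A *v x)$j = A$j$j * x$j + (\<Sum>l\<in>UNIV-{j}. A$j$l * x$l)"
    by (simp add: matrix_vector_mult_def sum.remove[of UNIV j])
  ultimately show ?thesis
    by (metis add_eq_0_iff2 add.commute)
qed

lemma dominant_block_schur_complement:
  fixes A :: "'a::real_normed_field^'n^'n"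
  assumes dom: "dominant_block I A" and "i \<in> I"
  shows "dominant_block (I - {i}) (schur_complement A i)"
  unfolding dominant_block_def
proof (intro conjI allI ballI impI)
  fix j l
  assume "j \<notin> I - {i}"
  then show "schur_complement A i $j$l = of_bool (l = j)"
    using dom by (cases "j = i") (auto simp: schur_complement_def dominant_block_def)
next
  fix j l
  assume "j \<in> I - {i}" "l \<notin> I - {i}"
  then show "schur_complement A i $j$l = 0"
    using dom \<open>i \<in> I\<close> by (auto simp: schur_complement_def dominant_block_def)
next
  fix j
  assume "j \<in> I - {i}"
  then show "(\<Sum>l\<in>UNIV-{j}. norm (schur_complement A i$j$l)) < norm (schur_complement A i$j$j)"
    using dom \<open>i \<in> I\<close> by (intro schur_complement_row_dominant) (auto simp: dominant_block_def)
qed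

lemma dominant_block_UNIV_if_norm_less:
  fixes A :: "'a::real_normed_field^'n^'n"
  assumes "norm (A - mat 1) < 1 / real CARD('n)"
  shows "dominant_block UNIV A"
  unfolding dominant_block_def
proof (intro conjI ballI allI impI; simp)
  fix j :: 'n
  have "(\<Sum>l\<in>UNIV. norm ((A - mat 1)$j$l)) \<le> real CARD('n) * norm (A - mat 1)"
    using order_trans[OF Finite_Cartesian_Product.norm_nth_le Finite_Cartesian_Product.norm_nth_le]
    by (intro sum_bounded_above[of UNIV, simplified]) blast
  also have "\<dots> < 1"
    using assms by (simp add: field_simps)
  finally have "(\<Sum>l\<in>UNIV. norm ((A - mat 1)$j$l)) < 1" .
  moreover have "(\<Sum>l\<in>UNIV-{j}. norm ((A - mat 1)$j$l)) = (\<Sum>l\<in>UNIV-{j}. norm (A$j$l))"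
    by (intro sum.cong) (auto simp: mat_def)
  ultimately have "norm (A$j$j - 1) + (\<Sum>l\<in>UNIV-{j}. norm (A$j$l)) < 1"
    by (simp add: sum.remove[of UNIV j] mat_def)
  moreover have "1 \<le> norm (A$j$j) + norm (A$j$j - 1)"
    using norm_triangle_ineq4[of "A$j$j" "A$j$j - 1"] by simp
  ultimately show "(\<Sum>l\<in>UNIV-{j}. norm (A$j$l)) < norm (A$j$j)"
    by linarith
qed

lemma vec_upd_nth [simp]: "vec_upd z i \<zeta> $ l = (if l = i then \<zeta> else z $ l)"
  by (simp add: vec_upd_def)

lemma torus_iter_append:
  "torus_iter (is @ [i]) F z =
   torus_iter is (\<lambda>y. contour_integral (circlepath 0 1) (\<lambda>\<zeta>. F (vec_upd y i \<zeta>))) z"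
  by (induction "is" arbitrary: z) simp_all

lemma torus_iter_cong:
  fixes F G :: "complex^'n \<Rightarrow> complex"
  assumes "\<And>y. \<forall>l\<in>set is. norm (y$l) = 1 \<Longrightarrow> \<forall>l. l \<notin> set is \<longrightarrow> y$l = z$l \<Longrightarrow> F y = G y"
  shows "torus_iter is F z = torus_iter is G z"
  using assms
proof (induction "is" arbitrary: z)
  case (Cons k "is")
  have "torus_iter is F (vec_upd z k \<zeta>) = torus_iter is G (vec_upd z k \<zeta>)" if "norm \<zeta> = 1" for \<zeta>
    using that by (intro Cons.IH Cons.prems) (auto split: if_splits)
  then show ?case
    by (auto intro: contour_integral_eq)
qed simp

lemma matrix_vector_mult_vec_upd:
  fixes A :: "complex^'n^'n"
  shows "(A *v vec_upd y i \<zeta>) $ j = A$j$i * \<zeta> + (\<Sum>l\<in>UNIV-{i}. A$j$l * y$l)"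
  by (simp add: matrix_vector_mult_def sum.remove[of UNIV i])

lemma holomorphic_on_vec_upd:
  fixes g :: "complex^'n \<Rightarrow> complex"
  assumes "holomorphic_cn g"
  shows "(\<lambda>\<zeta>. g (vec_upd z i \<zeta>)) holomorphic_on S"
proof -
  define e :: "complex^'n" where "e = axis i 1"
  have upd: "(\<lambda>\<zeta>. vec_upd z i 0 + \<zeta> *s e) = vec_upd z i"
    by (simp add: fun_eq_iff vec_eq_iff e_def axis_def)
  have "linear (\<lambda>h::complex. h *s e)"
    by (rule linearI) (simp_all add: vec_eq_iff distrib_right)
  from has_derivative_add[OF has_derivative_const[of "vec_upd z i 0"] linear_imp_has_derivative[OF this]]
  have upd_deriv: "(vec_upd z i has_derivative (\<lambda>h. h *s e)) (at w)" for w
    unfolding upd by simp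
  have "(\<lambda>\<zeta>. g (vec_upd z i \<zeta>)) field_differentiable at w" for w
  proof -
    obtain L where L: "(g has_derivative L) (at (vec_upd z i w))"
      and complex_linear: "\<And>(c::complex) v. L (c *s v) = c * L v"
      using assms unfolding holomorphic_cn_def by blast
    have "((\<lambda>\<zeta>. g (vec_upd z i \<zeta>)) has_derivative (\<lambda>h. L (h *s e))) (at w)"
      using has_derivative_compose[OF upd_deriv L] by (simp add: o_def)
    then show ?thesis
      unfolding field_differentiable_def has_field_derivative_def complex_linear mult.commute[of _ "L e"]
      by blast
  qed
  then show ?thesis
    by (simp add: holomorphic_on_def field_differentiable_at_within)
qed

lemma holomorphic_cn_compose_matrix:
  fixes M :: "complex^'n^'n"
  assumes "holomorphic_cn g"
  shows "holomorphic_cn (\<lambda>z. c * g (M *v z))"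
  unfolding holomorphic_cn_def
proof
  fix z
  obtain L where L: "(g has_derivative L) (at (M *v z))" and complex_linear: "\<forall>(c::complex) v. L (c *s v) = c * L v"
    using assms unfolding holomorphic_cn_def by blast
  have "((\<lambda>z. c * g (M *v z)) has_derivative (\<lambda>v. c * L (M *v v))) (at z)"
    using has_derivative_compose[OF linear_imp_has_derivative[OF matrix_vector_mul_linear] L]
    by (auto intro: has_derivative_mult_right simp: o_def)
  moreover have "\<forall>(b::complex) v. c * L (M *v (b *s v)) = b * (c * L (M *v v))"
    using complex_linear by (simp add: vector_scalar_commute)
  ultimately show "\<exists>L. ((\<lambda>z. c * g (M *v z)) has_derivative L) (at z) \<and> (\<forall>(b::complex) v. L (b *s v) = b * L v)"
    by blast
qed

definition elim_matrix :: "complex^'n^'n \<Rightarrow> 'n \<Rightarrow> complex^'n^'n" where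
  "elim_matrix A i = (\<chi> j l. if j = i then (if l = i then 0 else - A$i$l / A$i$i) else of_bool (l = j))"

lemma elim_matrix_mulv:
  "elim_matrix A i *v y = vec_upd y i (- (\<Sum>l\<in>UNIV-{i}. A$i$l * y$l) / A$i$i)"
proof -
  have "(\<Sum>l\<in>UNIV. (if l = i then 0 else - A$i$l / A$i$i) * y$l) = - (\<Sum>l\<in>UNIV-{i}. A$i$l * y$l) / A$i$i"
    by (simp add: sum.remove[of UNIV i] sum_divide_distrib flip: sum_negf)
  then show ?thesis
    by (auto simp: vec_eq_iff elim_matrix_def matrix_vector_mult_def)
qed

lemma schur_complement_mulv:
  fixes A :: "complex^'n^'n"
  assumes "j \<noteq> i"
  shows "(schur_complement A i *v y)$j = (A *v (elim_matrix A i *v y))$j"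
proof -
  have "(schur_complement A i *v y)$j = (\<Sum>l\<in>UNIV-{i}. A$j$l * y$l - A$j$i / A$i$i * (A$i$l * y$l))"
    using assms
    by (simp add: matrix_vector_mult_def sum.remove[of UNIV i] schur_complement_def algebra_simps)
  also have "\<dots> = (A *v (elim_matrix A i *v y))$j"
    by (simp add: elim_matrix_mulv matrix_vector_mult_vec_upd sum_subtractf sum_distrib_left sum_divide_distrib)
  finally show ?thesis .
qed

lemma elim_matrix_root:
  fixes A :: "complex^'n^'n"
  assumes "A$i$i \<noteq> 0"
  shows "(A *v (elim_matrix A i *v y))$i = 0"
  using assms by (simp add: elim_matrix_mulv matrix_vector_mult_vec_upd)

lemma dominant_block_root_in_disc:
  fixes A :: "complex^'n^'n" and y :: "complex^'n"
  assumes dom: "dominant_block I A" and "i \<in> I" and unit: "\<forall>l\<in>I-{i}. norm (y$l) = 1"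
  shows "norm ((elim_matrix A i *v y)$i) < 1"
proof (rule ccontr)
  \<comment> \<open>otherwise the root vector has its largest entry on \<open>I\<close> at \<open>i\<close>\<close>
  assume "\<not> norm ((elim_matrix A i *v y)$i) < 1"
  then have "(A *v (elim_matrix A i *v y))$i \<noteq> 0"
    using unit by (intro dominant_block_mulv_nonzero[OF dom \<open>i \<in> I\<close>]) (auto simp: elim_matrix_mulv)
  then show False
    using elim_matrix_root dominant_block_diag_nonzero[OF dom \<open>i \<in> I\<close>] by blast
qed

lemma dominant_block_other_rows_nonzero:
  fixes A :: "complex^'n^'n" and y :: "complex^'n"
  assumes dom: "dominant_block I A" and j: "j \<in> I - {i}"
    and unit: "\<forall>l\<in>I-{i}. norm (y$l) = 1" and "norm \<zeta> \<le> 1"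
  shows "(A *v vec_upd y i \<zeta>)$j \<noteq> 0"
proof -
  have "y$j \<noteq> 0"
    using j unit by force
  with j unit \<open>norm \<zeta> \<le> 1\<close> show ?thesis
    by (intro dominant_block_mulv_nonzero[OF dom]) auto
qed

lemma contour_integral_eliminate_coordinate:
  fixes A :: "complex^'n^'n" and g :: "complex^'n \<Rightarrow> complex" and y :: "complex^'n"
  assumes dom: "dominant_block I A" and "i \<in> I" and "holomorphic_cn g"
    and unit: "\<forall>l\<in>I-{i}. norm (y$l) = 1"
  shows "contour_integral (circlepath 0 1) (\<lambda>\<zeta>. g (vec_upd y i \<zeta>) / (\<Prod>j\<in>I. (A *v vec_upd y i \<zeta>)$j))
       = 2*pi*\<i> / A$i$i * g (elim_matrix A i *v y) / (\<Prod>j\<in>I-{i}. (schur_complement A i *v y)$j)"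
proof -
  define a where "a = A$i$i"
  define c where "c = - (\<Sum>l\<in>UNIV-{i}. A$i$l * y$l) / a"
  have "a \<noteq> 0"
    using dominant_block_diag_nonzero[OF dom \<open>i \<in> I\<close>] by (simp add: a_def)
  have elim: "elim_matrix A i *v y = vec_upd y i c"
    by (simp add: elim_matrix_mulv c_def a_def)
  have row_i: "(A *v vec_upd y i \<zeta>)$i = a * (\<zeta> - c)" for \<zeta>
    using \<open>a \<noteq> 0\<close> by (simp add: matrix_vector_mult_vec_upd c_def a_def field_simps)
  have "norm c < 1"
    using dominant_block_root_in_disc[OF dom \<open>i \<in> I\<close> unit] by (simp add: elim)
  have rows_holomorphic: "(\<lambda>\<zeta>. (A *v vec_upd y i \<zeta>)$j) holomorphic_on S" for j S
    by (simp add: matrix_vector_mult_vec_upd) (intro holomorphic_intros)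
  define h where "h \<zeta> = g (vec_upd y i \<zeta>) / (\<Prod>j\<in>I-{i}. (A *v vec_upd y i \<zeta>)$j) / a" for \<zeta>
  have "h holomorphic_on cball 0 1"
    unfolding h_def using dominant_block_other_rows_nonzero[OF dom _ unit] \<open>a \<noteq> 0\<close>
    by (intro holomorphic_intros holomorphic_on_vec_upd[OF \<open>holomorphic_cn g\<close>] rows_holomorphic) auto
  then have "((\<lambda>\<zeta>. h \<zeta> / (\<zeta> - c)) has_contour_integral 2 * of_real pi * \<i> * h c) (circlepath 0 1)"
    using \<open>norm c < 1\<close> by (intro Cauchy_integral_circlepath_simple) auto
  moreover have "g (vec_upd y i \<zeta>) / (\<Prod>j\<in>I. (A *v vec_upd y i \<zeta>)$j) = h \<zeta> / (\<zeta> - c)" for \<zeta>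
  proof -
    have "(\<Prod>j\<in>I. (A *v vec_upd y i \<zeta>)$j) = (\<zeta> - c) * ((\<Prod>j\<in>I-{i}. (A *v vec_upd y i \<zeta>)$j) * a)"
      using prod.remove[OF finite \<open>i \<in> I\<close>, of "\<lambda>j. (A *v vec_upd y i \<zeta>)$j"]
      by (simp only: row_i mult_ac)
    then show ?thesis
      by (simp only: h_def divide_divide_eq_left mult.commute)
  qed
  ultimately have "contour_integral (circlepath 0 1) (\<lambda>\<zeta>. g (vec_upd y i \<zeta>) / (\<Prod>j\<in>I. (A *v vec_upd y i \<zeta>)$j))
      = 2 * of_real pi * \<i> * h c"
    using contour_integral_unique by simp
  moreover have "(\<Prod>j\<in>I-{i}. (schur_complement A i *v y)$j) = (\<Prod>j\<in>I-{i}. (A *v vec_upd y i c)$j)"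
    by (intro prod.cong) (auto simp: schur_complement_mulv elim)
  ultimately show ?thesis
    by (simp add: h_def a_def elim)
qed

lemma torus_iter_dominant_block:
  fixes A :: "complex^'n^'n" and g :: "complex^'n \<Rightarrow> complex"
  assumes "distinct is" and "dominant_block (set is) A" and "holomorphic_cn g"
  shows "torus_iter is (\<lambda>z. g z / (\<Prod>j\<in>set is. (A *v z)$j)) 0 = (2*pi*\<i>)^length is * g 0 / det A"
  using assms
proof (induction "is" arbitrary: A g rule: rev_induct)
  case Nil
  then have "A = mat 1"
    by (auto simp: dominant_block_def vec_eq_iff mat_def)
  then show ?case
    by simp
next
  case (snoc i "is")
  have "i \<notin> set is" "distinct is"
    using snoc.prems(1) by auto
  then have "set (is @ [i]) - {i} = set is"
    by auto
  define g' where "g' y = 2*pi*\<i> / A$i$i * g (elim_matrix A i *v y)" for y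
  have "holomorphic_cn g'"
    unfolding g'_def using \<open>holomorphic_cn g\<close> by (rule holomorphic_cn_compose_matrix)
  moreover have "dominant_block (set is) (schur_complement A i)"
    using dominant_block_schur_complement[OF snoc.prems(2), of i] \<open>set (is @ [i]) - {i} = set is\<close>
    by simp
  ultimately have IH: "torus_iter is (\<lambda>y. g' y / (\<Prod>j\<in>set is. (schur_complement A i *v y)$j)) 0
      = (2*pi*\<i>)^length is * g' 0 / det (schur_complement A i)"
    using snoc.IH \<open>distinct is\<close> by blast
  have "torus_iter (is @ [i]) (\<lambda>z. g z / (\<Prod>j\<in>set (is @ [i]). (A *v z)$j)) 0
      = torus_iter is (\<lambda>y. contour_integral (circlepath 0 1)
          (\<lambda>\<zeta>. g (vec_upd y i \<zeta>) / (\<Prod>j\<in>set (is @ [i]). (A *v vec_upd y i \<zeta>)$j))) 0"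
    by (simp only: torus_iter_append)
  also have "\<dots> = torus_iter is (\<lambda>y. g' y / (\<Prod>j\<in>set is. (schur_complement A i *v y)$j)) 0"
    using contour_integral_eliminate_coordinate[OF snoc.prems(2) _ snoc.prems(3)]
      \<open>set (is @ [i]) - {i} = set is\<close>
    by (intro torus_iter_cong) (simp add: g'_def)
  also have "\<dots> = (2*pi*\<i>)^length (is @ [i]) * g 0 / det A"
  proof -
    have "A$i$i \<noteq> 0"
      using dominant_block_diag_nonzero[OF snoc.prems(2)] by simp
    then show ?thesis
      using IH det_schur_complement[of A i] by (simp add: g'_def field_simps)
  qed
  finally show ?case .
qed

theorem theorem3:
  fixes A :: "complex^'n^'n" and f :: "complex^'n \<Rightarrow> complex" and ord :: "'n list"
  assumes "distinct ord" and "set ord = UNIV"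
    and "norm (A - mat 1) < 1 / real CARD('n)"
    and "holomorphic_cn f"
  shows "f 0 / det A =
    torus_integral ord (\<lambda>z. f z / (\<Prod>j\<in>UNIV. (A *v z) $ j)) / (2 * pi * \<i>) ^ CARD('n)"
proof -
  have "distinct (rev ord)" "set (rev ord) = UNIV" "length (rev ord) = CARD('n)"
    using assms(1,2) distinct_card[OF assms(1)] by auto
  moreover have "dominant_block UNIV A"
    using assms(3) by (rule dominant_block_UNIV_if_norm_less)
  ultimately have "torus_integral ord (\<lambda>z. f z / (\<Prod>j\<in>UNIV. (A *v z) $ j)) = (2*pi*\<i>)^CARD('n) * f 0 / det A"
    using torus_iter_dominant_block[of "rev ord" A f] assms(4) by (simp add: torus_integral_def)
  then show ?thesis
    by simp
qed

end
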